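(* Let $\nu=\sum_{k=1}^K p^{(k)}\nu^{(k)}$ be a mixture model on $\mathbb{R}^d$ satisfying the standing assumptions below, and suppose there is $\beta\in\mathbb{R}$ with $\beta\,\mathbb{E}_{x\sim\nu}[|x_i-\mu_i(x)|]\ge\sqrt{\mathbb{E}_{x\sim\nu}[|x_i-\mu_i(x)|^2]}$ for all $i\in[d]$. Let $q=ENR(\nu)>0$. Then the MMDT algorithm (described below) returns a decision tree with $$P_{x\sim\nu}\big(\hat\mu(x)\ne\mu(x)\big)\le\frac{(4+2\pi^2/3)\,\alpha K(K-1)}{q}.$$
   Context: Standing assumptions: $\nu=\sum_{k=1}^K p^{(k)}\nu^{(k)}$, $\sum_k p^{(k)}=1$, each $\nu^{(k)}$ a discrete or absolutely continuous probability distribution on $\mathbb{R}^d$ with mean $\mu^{(k)}$ and density/mass function symmetric about $\mu^{(k)}$; all components share finite coordinate-wise variances $\sigma_1^2,\dots,\sigma_d^2>0$; $p^{(k)}\le\alpha/K$ for all $k$ with fixed $\alpha\ge1$. For $x\sim\nu$ drawn from component $k$, $\mu(x)=\mu^{(k)}$. $ENR(\nu)=\min_{k\ne l}\max_{j\in[d]}|\mu^{(k)}_j-\mu^{(l)}_j|^2/\sigma_j^2$. MMDT algorithm: start with a single root node whose index set is $N=[K]$. Repeatedly, for each node with index set $N$, $|N|\ge2$: choose the axis $i(N)\in\arg\max_{i\in[d]}\sigma_i^{-1}\max_{k,l\in N}|\mu^{(k)}_i-\mu^{(l)}_i|$; with $\nu(N)=\sum_{k\in N}\bar p^{(k)}\nu^{(k)}$,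 $\bar p^{(k)}=p^{(k)}/\sum_{m\in N}p^{(m)}$, choose a threshold $\theta$ with $\min_{k\in N}\mu^{(k)}_i<\theta<\max_{k\in N}\mu^{(k)}_i$ minimizing $P_{x\sim\nu(N)}(x \text{ and } \mu(x) \text{ lie on opposite sides of the cut } x_i\le\theta)$ (ties broken randomly; when the exact densities are unknown, instead minimize the Chebyshev upper bound $\sum_{k\in N}\bar p^{(k)}\sigma_i^2|\mu^{(k)}_i-\theta|^{-2}$); split the node by the cut $x_i\le\theta$ into two children with index sets $\{k\in N:\mu^{(k)}_i\le\theta\}$ and $\{k\in N:\mu^{(k)}_i>\theta\}$. Stop when every leaf has a single index. The resulting tree partitions $\mathbb{R}^d$ into $K$ leaves each containing exactly one mean; $\hat\mu(x)$ denotes the mean $\mu^{(k)}$ lying in the same leaf as $x$. *)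

theory Defs
  imports "HOL-Probability.Probability"
begin

text \<open>Axis-aligned decision trees on real^'d: a leaf carries a component index,
  an inner node carries an axis i, a threshold theta and the two subtrees
  (left child = points with x_i <= theta).\<close>
datatype 'd dtree = Leaf nat | Node 'd real "'d dtree" "'d dtree"

fun classify :: "'d dtree \<Rightarrow> real^'d \<Rightarrow> nat" where
  "classify (Leaf k) x = k"
| "classify (Node i \<theta> L R) x = (if x $ i \<le> \<theta> then classify L x else classify R x)"

definition mixture_model ::
  "nat \<Rightarrow> (nat \<Rightarrow> real) \<Rightarrow> (nat \<Rightarrow> (real^'d) measure) \<Rightarrow> (nat \<Rightarrow> real^'d)
   \<Rightarrow> ('d \<Rightarrow> real) \<Rightarrow> real \<Rightarrow> bool" where
  "mixture_model K p M \<mu> \<sigma> \<alpha> \<longleftrightarrow>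
     (\<forall>k<K. p k \<ge> 0) \<and> (\<Sum>k<K. p k) = 1 \<and> \<alpha> \<ge> 1 \<and> (\<forall>k<K. p k \<le> \<alpha> / real K) \<and>
     (\<forall>j. \<sigma> j > 0) \<and>
     (\<forall>k<K.
        prob_space (M k) \<and> sets (M k) = sets borel \<and>
        ((\<exists>S. countable S \<and> S \<in> sets (M k) \<and> emeasure (M k) S = 1)
          \<or> absolutely_continuous lborel (M k)) \<and>
        distr (M k) borel (\<lambda>x. 2 *\<^sub>R \<mu> k - x) = M k \<and>
        (\<forall>j. integrable (M k) (\<lambda>x. x $ j) \<and> (\<integral>x. x $ j \<partial>M k) = \<mu> k $ j) \<and>
        (\<forall>j. integrable (M k) (\<lambda>x. (x $ j - \<mu> k $ j)\<^sup>2) \<and>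
             (\<integral>x. (x $ j - \<mu> k $ j)\<^sup>2 \<partial>M k) = (\<sigma> j)\<^sup>2))"

definition ENR :: "nat \<Rightarrow> (nat \<Rightarrow> real^'d) \<Rightarrow> ('d \<Rightarrow> real) \<Rightarrow> real" where
  "ENR K \<mu> \<sigma> = Min {Max (range (\<lambda>j. \<bar>\<mu> k $ j - \<mu> l $ j\<bar>\<^sup>2 / (\<sigma> j)\<^sup>2)) | k l. k < K \<and> l < K \<and> k \<noteq> l}"

definition spread :: "(nat \<Rightarrow> real^'d) \<Rightarrow> ('d \<Rightarrow> real) \<Rightarrow> nat set \<Rightarrow> 'd \<Rightarrow> real" where
  "spread \<mu> \<sigma> N i = Max {\<bar>\<mu> k $ i - \<mu> l $ i\<bar> | k l. k \<in> N \<and> l \<in> N} / \<sigma> i"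

definition split_error ::
  "(nat \<Rightarrow> real) \<Rightarrow> (nat \<Rightarrow> (real^'d) measure) \<Rightarrow> (nat \<Rightarrow> real^'d) \<Rightarrow> nat set \<Rightarrow> 'd \<Rightarrow> real \<Rightarrow> real" where
  "split_error p M \<mu> N i \<theta> =
     (\<Sum>k\<in>N. (p k / (\<Sum>m\<in>N. p m)) *
        measure (M k) {x. (x $ i \<le> \<theta>) \<noteq> (\<mu> k $ i \<le> \<theta>)})"

text \<open>mmdt p M mu sigma N T: T is a possible output of MMDT run on the node with
  index set N (any choice among ties).\<close>
inductive mmdt ::
  "(nat \<Rightarrow> real) \<Rightarrow> (nat \<Rightarrow> (real^'d) measure) \<Rightarrow> (nat \<Rightarrow> real^'d) \<Rightarrow> ('d \<Rightarrow> real)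
   \<Rightarrow> nat set \<Rightarrow> 'd dtree \<Rightarrow> bool"
  for p M \<mu> \<sigma> where
  leaf: "mmdt p M \<mu> \<sigma> {k} (Leaf k)"
| node: "\<lbrakk> finite N; card N \<ge> 2;
          \<forall>i'. spread \<mu> \<sigma> N i' \<le> spread \<mu> \<sigma> N i;
          Min ((\<lambda>k. \<mu> k $ i) ` N) < \<theta>; \<theta> < Max ((\<lambda>k. \<mu> k $ i) ` N);
          \<forall>\<theta>'. Min ((\<lambda>k. \<mu> k $ i) ` N) < \<theta>' \<and> \<theta>' < Max ((\<lambda>k. \<mu> k $ i) ` N)
                 \<longrightarrow> split_error p M \<mu> N i \<theta> \<le> split_error p M \<mu> N i \<theta>';
          mmdt p M \<mu> \<sigma> {k\<in>N. \<mu> k $ i \<le> \<theta>} L;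
          mmdt p M \<mu> \<sigma> {k\<in>N. \<mu> k $ i > \<theta>} R \<rbrakk>
        \<Longrightarrow> mmdt p M \<mu> \<sigma> N (Node i \<theta> L R)"

end

theory Submission
  imports Defs
begin

(*
  Fix an inner node with n means and let D be the range of their coordinates along the
  chosen axis i.  Some threshold theta' strictly between them satisfies
  sum_k 1/(mu_k,i - theta')^2 <= 20 n (n - 1) / D^2: by a discrete rising-sun argument there
  is a point that, in each direction, sees at most gamma t of the means within distance t,
  where gamma = (2n - 1)/D, and then the j-th nearest mean on each side is at distance at
  least j/gamma.  Chebyshev's inequality bounds the weighted cut error at theta' by
  (alpha/K) sigma_i^2 times this sum, and the maximal-spread choice of the axis gives
  q sigma_i^2 <= D^2; since MMDT's threshold is optimal, the node contributes at most
  20 alpha n (n - 1) / (K q).  A node with n = a + b means has children of sizes a and b, and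
  n (n - 1) + f a + f b <= f n for f n = (n^3 - n)/3, so the error of the whole tree is at most
  20 alpha (K^3 - K) / (3 K q), which is below the claimed bound because pi^2 >= 9.
*)

section \<open>Thresholds with few nearby points\<close>

lemma finite_sorted_enumeration:
  fixes Y :: "'a::linorder set"
  assumes "finite Y" "Y \<noteq> {}"
  obtains z :: "nat \<Rightarrow> 'a" and r :: nat where "strict_mono_on {..r} z" "z ` {..r} = Y"
proof -
  define zs where "zs = sorted_list_of_set Y"
  have "length zs > 0"
    using assms by (simp add: zs_def card_gt_0_iff)
  then obtain r where "length zs = Suc r"
    using gr0_implies_Suc by blast
  then have idx: "{..r} = {..<length zs}"
    by (simp add: lessThan_Suc_atMost)
  have "sorted_wrt (<) zs"
    by (simp add: zs_def)
  then have "strict_mono_on {..r} (nth zs)"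
    unfolding idx by (intro strict_mono_onI) (auto simp: sorted_wrt_nth_less)
  moreover have "nth zs ` {..<length zs} = set zs"
    by (auto simp: in_set_conv_nth)
  then have "nth zs ` {..r} = Y"
    using assms idx by (simp add: zs_def)
  ultimately show thesis
    by (rule that)
qed

lemma sum_inverse_squares_le:
  assumes "1 \<le> n"
  shows "(\<Sum>i=1..n. 1 / (real i)\<^sup>2) \<le> 2 - 1 / real n"
  using assms
proof (induction n rule: nat_induct_at_least)
  case base
  then show ?case by simp
next
  case (Suc n)
  have "1 / (real n + 1)\<^sup>2 \<le> 1 / (real n * (real n + 1))"
    using Suc.hyps by (intro divide_left_mono) (auto simp: power2_eq_square)
  also have "\<dots> = 1 / real n - 1 / (real n + 1)"
    using Suc.hyps by (simp add: field_simps)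
  finally show ?case
    using Suc.IH by (simp add: add.commute)
qed

lemma sum_inverse_squares_le_two: "(\<Sum>i=1..n. 1 / (real i)\<^sup>2) \<le> 2"
proof (cases "n = 0")
  case False
  then have "(\<Sum>i=1..n. 1 / (real i)\<^sup>2) \<le> 2 - 1 / real n"
    by (intro sum_inverse_squares_le) simp
  also have "\<dots> \<le> 2"
    by simp
  finally show ?thesis .
qed simp

lemma sum_inverse_square_le_of_rank_bound:
  fixes d :: "'a \<Rightarrow> real"
  assumes "finite R" "\<And>k. k \<in> R \<Longrightarrow> 0 < d k"
    and "\<And>k. k \<in> R \<Longrightarrow> real (card {j\<in>R. d j \<le> d k}) \<le> \<gamma> * d k"
  shows "(\<Sum>k\<in>R. 1 / (d k)\<^sup>2) \<le> \<gamma>\<^sup>2 * (\<Sum>i=1..card R. 1 / (real i)\<^sup>2)"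
  using assms
proof (induction R rule: finite_ranking_induct[where f = d])
  case empty
  then show ?case by simp
next
  case (insert x S)
  show ?case
  proof (cases "x \<in> S")
    case True
    then show ?thesis
      using insert by (simp add: insert_absorb)
  next
    case False
    have "real (card {j\<in>S. d j \<le> d k}) \<le> \<gamma> * d k" if "k \<in> S" for k
    proof -
      have "card {j\<in>S. d j \<le> d k} \<le> card {j\<in>insert x S. d j \<le> d k}"
        using insert.hyps(1) by (intro card_mono) auto
      then show ?thesis
        using insert.prems(2)[of k] that by simp
    qed
    then have IH: "(\<Sum>k\<in>S. 1 / (d k)\<^sup>2) \<le> \<gamma>\<^sup>2 * (\<Sum>i=1..card S. 1 / (real i)\<^sup>2)"
      using insert by simp
    have "{j\<in>insert x S. d j \<le> d x} = insert x S"
      using insert.hyps(2) by auto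
    then have "real (card S) + 1 \<le> \<gamma> * d x"
      using insert.prems(2)[of x] False insert.hyps(1) by simp
    then have "(real (card S) + 1)\<^sup>2 \<le> (\<gamma> * d x)\<^sup>2"
      by (intro power_mono) auto
    then have "1 / (d x)\<^sup>2 \<le> \<gamma>\<^sup>2 / (real (card S) + 1)\<^sup>2"
      using insert.prems(1)[of x] by (simp add: field_simps power_mult_distrib)
    then show ?thesis
      using IH False insert.hyps(1) by (simp add: algebra_simps)
  qed
qed

definition sparse_above :: "('a \<Rightarrow> real) \<Rightarrow> 'a set \<Rightarrow> real \<Rightarrow> real \<Rightarrow> bool" where
  "sparse_above y N \<gamma> \<theta> \<longleftrightarrow>
     (\<forall>k\<in>N. \<theta> < y k \<longrightarrow> real (card {j\<in>N. \<theta> < y j \<and> y j \<le> y k}) \<le> \<gamma> * (y k - \<theta>))"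

definition sparse_below :: "('a \<Rightarrow> real) \<Rightarrow> 'a set \<Rightarrow> real \<Rightarrow> real \<Rightarrow> bool" where
  "sparse_below y N \<gamma> \<theta> \<longleftrightarrow>
     (\<forall>k\<in>N. y k < \<theta> \<longrightarrow> real (card {j\<in>N. y k \<le> y j \<and> y j < \<theta>}) \<le> \<gamma> * (\<theta> - y k))"

lemma sparse_below_iff_sparse_above_uminus:
  "sparse_below y N \<gamma> \<theta> \<longleftrightarrow> sparse_above (\<lambda>k. - y k) N \<gamma> (- \<theta>)"
  unfolding sparse_below_def sparse_above_def by (simp add: conj_commute)

lemma sum_inverse_square_above_le:
  assumes "finite N" "sparse_above y N \<gamma> \<theta>"
  shows "(\<Sum>k\<in>{k\<in>N. \<theta> < y k}. 1 / (y k - \<theta>)\<^sup>2) \<le> 2 * \<gamma>\<^sup>2"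
proof -
  let ?R = "{k\<in>N. \<theta> < y k}"
  have "(\<Sum>k\<in>?R. 1 / (y k - \<theta>)\<^sup>2) \<le> \<gamma>\<^sup>2 * (\<Sum>i=1..card ?R. 1 / (real i)\<^sup>2)"
  proof (rule sum_inverse_square_le_of_rank_bound)
    fix k
    assume k: "k \<in> ?R"
    have "{j\<in>?R. y j - \<theta> \<le> y k - \<theta>} = {j\<in>N. \<theta> < y j \<and> y j \<le> y k}"
      by auto
    then show "real (card {j\<in>?R. y j - \<theta> \<le> y k - \<theta>}) \<le> \<gamma> * (y k - \<theta>)"
      using assms(2) k unfolding sparse_above_def by auto
  qed (use assms(1) in auto)
  also have "\<dots> \<le> \<gamma>\<^sup>2 * 2"
    by (intro mult_left_mono sum_inverse_squares_le_two) simp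
  finally show ?thesis
    by simp
qed

lemma sum_inverse_square_below_le:
  assumes "finite N" "sparse_below y N \<gamma> \<theta>"
  shows "(\<Sum>k\<in>{k\<in>N. y k < \<theta>}. 1 / (y k - \<theta>)\<^sup>2) \<le> 2 * \<gamma>\<^sup>2"
  using sum_inverse_square_above_le[of N "\<lambda>k. - y k" \<gamma> "- \<theta>"] assms
  by (simp add: sparse_below_iff_sparse_above_uminus power2_commute)

definition count_le :: "('a \<Rightarrow> real) \<Rightarrow> 'a set \<Rightarrow> real \<Rightarrow> real" where
  "count_le y N t = real (card {j\<in>N. y j \<le> t})"

definition count_less :: "('a \<Rightarrow> real) \<Rightarrow> 'a set \<Rightarrow> real \<Rightarrow> real" where
  "count_less y N t = real (card {j\<in>N. y j < t})"

lemma real_card_Diff_subset: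
  assumes "finite A" "B \<subseteq> A"
  shows "real (card (A - B)) = real (card A) - real (card B)"
  using assms by (simp add: card_Diff_subset card_mono finite_subset of_nat_diff)

lemma sparse_above_iff_potential:
  assumes "finite N"
  shows "sparse_above y N \<gamma> \<theta> \<longleftrightarrow>
    (\<forall>k\<in>N. \<theta> < y k \<longrightarrow> \<gamma> * \<theta> - count_le y N \<theta> \<le> \<gamma> * y k - count_le y N (y k))"
proof -
  have "real (card {j\<in>N. \<theta> < y j \<and> y j \<le> y k}) = count_le y N (y k) - count_le y N \<theta>"
    if "\<theta> < y k" for k
  proof -
    have "{j\<in>N. \<theta> < y j \<and> y j \<le> y k} = {j\<in>N. y j \<le> y k} - {j\<in>N. y j \<le> \<theta>}"
      by auto
    then show ?thesis
      using assms that by (simp add: count_le_def real_card_Diff_subset subset_iff)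
  qed
  then show ?thesis
    unfolding sparse_above_def by (smt (verit) right_diff_distrib)
qed

lemma sparse_below_iff_potential:
  assumes "finite N"
  shows "sparse_below y N \<gamma> \<theta> \<longleftrightarrow>
    (\<forall>k\<in>N. y k < \<theta> \<longrightarrow> \<gamma> * y k - count_less y N (y k) \<le> \<gamma> * \<theta> - count_less y N \<theta>)"
proof -
  have "real (card {j\<in>N. y k \<le> y j \<and> y j < \<theta>}) = count_less y N \<theta> - count_less y N (y k)"
    if "y k < \<theta>" for k
  proof -
    have "{j\<in>N. y k \<le> y j \<and> y j < \<theta>} = {j\<in>N. y j < \<theta>} - {j\<in>N. y j < y k}"
      by auto
    then show ?thesis
      using assms that by (simp add: count_less_def real_card_Diff_subset subset_iff)
  qed
  then show ?thesis
    unfolding sparse_below_def by (smt (verit) right_diff_distrib)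
qed

lemma count_less_le_count_le:
  assumes "finite N"
  shows "count_less y N t \<le> count_le y N t"
  unfolding count_less_def count_le_def using assms by (intro of_nat_mono card_mono) auto

lemma count_less_add_one_le_count_le:
  assumes "finite N" "v \<in> y ` N"
  shows "count_less y N v + 1 \<le> count_le y N v"
proof -
  have "{j\<in>N. y j < v} \<subset> {j\<in>N. y j \<le> v}"
    using assms(2) by force
  then have "card {j\<in>N. y j < v} < card {j\<in>N. y j \<le> v}"
    using assms(1) by (intro psubset_card_mono) auto
  then show ?thesis
    by (simp add: count_less_def count_le_def)
qed

lemma count_le_Max:
  assumes "finite N"
  shows "count_le y N (Max (y ` N)) = real (card N)"
proof -
  have "{j\<in>N. y j \<le> Max (y ` N)} = N"
    using assms by auto
  then show ?thesis
    by (simp add: count_le_def)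
qed

lemma count_less_Min:
  assumes "finite N"
  shows "count_less y N (Min (y ` N)) = 0"
proof -
  have "{j\<in>N. y j < Min (y ` N)} = {}"
    using assms by (auto simp: not_less)
  then show ?thesis
    unfolding count_less_def by (metis card.empty of_nat_0)
qed

text \<open>
  A discrete rising-sun lemma.  Read \<open>z\<close> as the increasing list of data values and \<open>C l\<close>,
  \<open>C' l\<close> as the numbers of data points \<open>\<le> z l\<close> and \<open>< z l\<close>.  A threshold \<open>\<theta>\<close> in the gap
  \<open>(z i, z (Suc i))\<close> is then sparse on both sides iff its potential \<open>\<gamma> * \<theta> - C i\<close> lies between
  the maximum and the minimum below; if no gap had this property, the increments of these
  running extrema would add up to more than \<open>\<gamma> * (z r - z 0)\<close>.
\<close>
lemma rising_sun_gap:
  fixes z C C' :: "nat \<Rightarrow> real"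
  assumes z_mono: "\<And>i. i < r \<Longrightarrow> z i \<le> z (Suc i)" and "0 \<le> \<gamma>"
    and C'_Suc: "\<And>i. i < r \<Longrightarrow> C' (Suc i) = C i"
    and C'_le: "\<And>l. l \<le> r \<Longrightarrow> C' l \<le> C l"
    and dense: "(C r - C 0) + (C' r - C' 0) < \<gamma> * (z r - z 0)"
  shows "\<exists>i<r. Max ((\<lambda>l. \<gamma> * z l - C' l) ` {..i}) \<le> Min ((\<lambda>l. \<gamma> * z l - C l) ` {Suc i..r})"
proof (rule ccontr)
  define P where "P l = \<gamma> * z l - C l" for l
  define Q where "Q l = \<gamma> * z l - C' l" for l
  define m where "m i = Min (P ` {i..r})" for i
  define M where "M i = Max (Q ` {..i})" for i
  assume "\<not> ?thesis"
  then have crossing: "m (Suc i) < M i" if "i < r" for i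
    using that by (auto simp: m_def M_def P_def Q_def not_le Max_gr_iff)
  have step: "(m (Suc i) - m i) + (M (Suc i) - M i) \<le> \<gamma> * (z (Suc i) - z i)" if "i < r" for i
  proof -
    let ?g = "\<gamma> * (z (Suc i) - z i)"
    define u where "u = m (Suc i) - P i"
    define v where "v = Q (Suc i) - M i"
    have "{i..r} = insert i {Suc i..r}"
      using that by auto
    then have "m i = min (P i) (m (Suc i))"
      using that by (simp add: m_def)
    then have m_incr: "m (Suc i) - m i = max 0 u"
      by (simp add: u_def max_def min_def)
    have "M (Suc i) = max (Q (Suc i)) (M i)"
      by (simp add: M_def atMost_Suc)
    then have M_incr: "M (Suc i) - M i = max 0 v"
      by (simp add: v_def max_def)
    have "m (Suc i) \<le> P (Suc i)" "Q i \<le> M i"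
      using that by (simp_all add: m_def M_def)
    then have "u \<le> ?g" "v \<le> ?g"
      using that C'_Suc[OF that] C'_le[of i] C'_le[of "Suc i"]
      by (simp_all add: u_def v_def P_def Q_def right_diff_distrib)
    moreover have "u + v < ?g"
      using crossing[OF that] C'_Suc[OF that] by (simp add: u_def v_def P_def Q_def right_diff_distrib)
    moreover have "0 \<le> ?g"
      using z_mono[OF that] \<open>0 \<le> \<gamma>\<close> by simp
    ultimately have "max 0 u + max 0 v \<le> ?g"
      by linarith
    then show ?thesis
      unfolding m_incr M_incr .
  qed
  have "(\<Sum>i<r. (m (Suc i) - m i) + (M (Suc i) - M i)) \<le> (\<Sum>i<r. \<gamma> * (z (Suc i) - z i))"
    using step by (intro sum_mono) simp
  then have "(m r - m 0) + (M r - M 0) \<le> \<gamma> * (z r - z 0)"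
    by (simp add: sum.distrib sum_lessThan_telescope flip: sum_distrib_left)
  moreover have "m r = P r" "m 0 \<le> P 0" "M 0 = Q 0" "Q r \<le> M r"
    by (simp_all add: m_def M_def)
  ultimately show False
    using dense unfolding P_def Q_def by (simp add: right_diff_distrib)
qed

context
  fixes y :: "'a \<Rightarrow> real" and N :: "'a set" and z :: "nat \<Rightarrow> real" and r :: nat
  assumes finite_N: "finite N" and z_mono: "strict_mono_on {..r} z" and z_image: "z ` {..r} = y ` N"
begin

lemma enumeration_le_iff: "l \<le> r \<Longrightarrow> l' \<le> r \<Longrightarrow> z l \<le> z l' \<longleftrightarrow> l \<le> l'"
  using strict_mono_on_less_eq[OF z_mono] by simp

lemma enumeration_index:
  assumes "v \<in> y ` N"
  obtains l where "l \<le> r" "v = z l"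
proof -
  have "v \<in> z ` {..r}"
    using assms z_image by simp
  then show thesis
    using that by auto
qed

lemma enumeration_Min: "z 0 = Min (y ` N)"
proof (rule Min_eqI[symmetric])
  show "z 0 \<le> v" if v: "v \<in> y ` N" for v
  proof -
    obtain l where "l \<le> r" "v = z l"
      using v by (rule enumeration_index)
    then show ?thesis
      using enumeration_le_iff[of 0 l] by simp
  qed
  show "z 0 \<in> y ` N"
    using z_image by auto
qed (use finite_N in simp)

lemma enumeration_Max: "z r = Max (y ` N)"
proof (rule Max_eqI[symmetric])
  show "v \<le> z r" if v: "v \<in> y ` N" for v
  proof -
    obtain l where "l \<le> r" "v = z l"
      using v by (rule enumeration_index)
    then show ?thesis
      using enumeration_le_iff[of l r] by simp
  qed
  show "z r \<in> y ` N"
    using z_image by auto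
qed (use finite_N in simp)

lemma enumeration_gap:
  assumes "i < r" "v \<in> y ` N"
  shows "v \<le> z i \<or> z (Suc i) \<le> v"
proof -
  obtain l where "l \<le> r" "v = z l"
    using assms(2) by (rule enumeration_index)
  then show ?thesis
    using enumeration_le_iff[of l i] enumeration_le_iff[of "Suc i" l] assms(1)
    by (cases "l \<le> i") auto
qed

lemma count_le_gap:
  assumes "i < r" "z i \<le> t" "t < z (Suc i)"
  shows "count_le y N t = count_le y N (z i)"
proof -
  have "y j \<le> t \<longleftrightarrow> y j \<le> z i" if "j \<in> N" for j
    using enumeration_gap[OF assms(1), of "y j"] that assms(2,3) by auto
  then have "{j\<in>N. y j \<le> t} = {j\<in>N. y j \<le> z i}"
    by blast
  then show ?thesis
    by (simp add: count_le_def)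
qed

lemma count_less_gap:
  assumes "i < r" "z i < t" "t \<le> z (Suc i)"
  shows "count_less y N t = count_le y N (z i)"
proof -
  have "y j < t \<longleftrightarrow> y j \<le> z i" if "j \<in> N" for j
    using enumeration_gap[OF assms(1), of "y j"] that assms(2,3) by auto
  then have "{j\<in>N. y j < t} = {j\<in>N. y j \<le> z i}"
    by blast
  then show ?thesis
    by (simp add: count_less_def count_le_def)
qed

lemma sparse_above_in_gap:
  assumes "i < r" "z i < \<theta>" "\<theta> < z (Suc i)"
    and potential: "\<And>l. Suc i \<le> l \<Longrightarrow> l \<le> r \<Longrightarrow> \<gamma> * \<theta> - count_le y N (z i) \<le> \<gamma> * z l - count_le y N (z l)"
  shows "sparse_above y N \<gamma> \<theta>"
  unfolding sparse_above_iff_potential[OF finite_N]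
proof (intro ballI impI)
  fix k
  assume "k \<in> N" "\<theta> < y k"
  obtain l where "l \<le> r" "y k = z l"
    using \<open>k \<in> N\<close> by (blast intro: enumeration_index)
  have "Suc i \<le> l"
  proof (rule ccontr)
    assume "\<not> Suc i \<le> l"
    then have "z l \<le> z i"
      using enumeration_le_iff[of l i] assms(1) \<open>l \<le> r\<close> by simp
    then show False
      using assms(2) \<open>\<theta> < y k\<close> \<open>y k = z l\<close> by simp
  qed
  then show "\<gamma> * \<theta> - count_le y N \<theta> \<le> \<gamma> * y k - count_le y N (y k)"
    using potential \<open>l \<le> r\<close> \<open>y k = z l\<close> count_le_gap[OF assms(1) less_imp_le[OF assms(2)] assms(3)]
    by simp
qed

lemma sparse_below_in_gap:
  assumes "i < r" "z i < \<theta>" "\<theta> < z (Suc i)"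
    and potential: "\<And>l. l \<le> i \<Longrightarrow> \<gamma> * z l - count_less y N (z l) \<le> \<gamma> * \<theta> - count_le y N (z i)"
  shows "sparse_below y N \<gamma> \<theta>"
  unfolding sparse_below_iff_potential[OF finite_N]
proof (intro ballI impI)
  fix k
  assume "k \<in> N" "y k < \<theta>"
  obtain l where "l \<le> r" "y k = z l"
    using \<open>k \<in> N\<close> by (blast intro: enumeration_index)
  have "l \<le> i"
  proof (rule ccontr)
    assume "\<not> l \<le> i"
    then have "z (Suc i) \<le> z l"
      using enumeration_le_iff[of "Suc i" l] assms(1) \<open>l \<le> r\<close> by simp
    then show False
      using assms(3) \<open>y k < \<theta>\<close> \<open>y k = z l\<close> by simp
  qed
  then show "\<gamma> * y k - count_less y N (y k) \<le> \<gamma> * \<theta> - count_less y N \<theta>"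
    using potential \<open>y k = z l\<close> count_less_gap[OF assms(1,2) less_imp_le[OF assms(3)]] by simp
qed

lemma exists_sparse_threshold_in_gap:
  assumes "0 < \<gamma>" and dense: "2 * (real (card N) - 1) < \<gamma> * (z r - z 0)"
  shows "\<exists>i<r. \<exists>\<theta>. z i < \<theta> \<and> \<theta> < z (Suc i) \<and> sparse_above y N \<gamma> \<theta> \<and> sparse_below y N \<gamma> \<theta>"
proof -
  let ?C = "\<lambda>l. count_le y N (z l)" and ?C' = "\<lambda>l. count_less y N (z l)"
  have z_in: "z l \<in> y ` N" if "l \<le> r" for l
    using z_image that by auto
  have z_step: "z i < z (Suc i)" if "i < r" for i
    using strict_mono_onD[OF z_mono] that by simp
  have C_gap: "?C' l + 1 \<le> ?C l" if "l \<le> r" for l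
    using count_less_add_one_le_count_le[OF finite_N z_in[OF that]] .
  have C'_Suc: "?C' (Suc i) = ?C i" if "i < r" for i
    using count_less_gap[OF that z_step[OF that] order_refl] .
  have C'_le: "?C' l \<le> ?C l" for l
    using count_less_le_count_le[OF finite_N] .
  have "?C r = real (card N)" "?C' 0 = 0"
    using count_le_Max count_less_Min finite_N enumeration_Min enumeration_Max by simp_all
  then have "(?C r - ?C 0) + (?C' r - ?C' 0) < \<gamma> * (z r - z 0)"
    using C_gap[of 0] C_gap[of r] dense by simp
  from rising_sun_gap[OF less_imp_le[OF z_step] less_imp_le[OF \<open>0 < \<gamma>\<close>] C'_Suc C'_le this]
  obtain i where "i < r" and separated:
    "Max ((\<lambda>l. \<gamma> * z l - ?C' l) ` {..i}) \<le> Min ((\<lambda>l. \<gamma> * z l - ?C l) ` {Suc i..r})"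
    by blast
  define \<theta> where "\<theta> = (Max ((\<lambda>l. \<gamma> * z l - ?C' l) ` {..i}) + ?C i) / \<gamma>"
  have potential_\<theta>: "\<gamma> * \<theta> - ?C i = Max ((\<lambda>l. \<gamma> * z l - ?C' l) ` {..i})"
    using \<open>0 < \<gamma>\<close> by (simp add: \<theta>_def)
  have below: "\<gamma> * z l - ?C' l \<le> \<gamma> * \<theta> - ?C i" if "l \<le> i" for l
    unfolding potential_\<theta> using that by (intro Max_ge) auto
  have above: "\<gamma> * \<theta> - ?C i \<le> \<gamma> * z l - ?C l" if "Suc i \<le> l" "l \<le> r" for l
  proof -
    have "Min ((\<lambda>l. \<gamma> * z l - ?C l) ` {Suc i..r}) \<le> \<gamma> * z l - ?C l"
      using that by (intro Min_le) auto
    then show ?thesis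
      using separated unfolding potential_\<theta> by linarith
  qed
  have "\<gamma> * z i < \<gamma> * \<theta>"
    using below[of i] C_gap[of i] \<open>i < r\<close> by simp
  moreover have "\<gamma> * \<theta> < \<gamma> * z (Suc i)"
    using above[of "Suc i"] C_gap[of "Suc i"] C'_Suc[OF \<open>i < r\<close>] \<open>i < r\<close> by simp
  ultimately have "z i < \<theta>" "\<theta> < z (Suc i)"
    using \<open>0 < \<gamma>\<close> by simp_all
  then show ?thesis
    using sparse_above_in_gap[OF \<open>i < r\<close> \<open>z i < \<theta>\<close> \<open>\<theta> < z (Suc i)\<close> above]
      sparse_below_in_gap[OF \<open>i < r\<close> \<open>z i < \<theta>\<close> \<open>\<theta> < z (Suc i)\<close> below] \<open>i < r\<close>
    by blast
qed

end

lemma exists_sparse_threshold: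
  fixes y :: "'a \<Rightarrow> real"
  assumes "finite N" "N \<noteq> {}" and spread: "Min (y ` N) < Max (y ` N)"
    and dense: "2 * (real (card N) - 1) < \<gamma> * (Max (y ` N) - Min (y ` N))"
  shows "\<exists>\<theta>. Min (y ` N) < \<theta> \<and> \<theta> < Max (y ` N) \<and> \<theta> \<notin> y ` N \<and>
    sparse_above y N \<gamma> \<theta> \<and> sparse_below y N \<gamma> \<theta>"
proof -
  obtain z :: "nat \<Rightarrow> real" and r :: nat where enum: "strict_mono_on {..r} z" "z ` {..r} = y ` N"
    by (rule finite_sorted_enumeration[of "y ` N"]) (use assms in auto)
  note enumeration = enumeration_Min[OF assms(1) enum] enumeration_Max[OF assms(1) enum]
  have "0 \<le> 2 * (real (card N) - 1)"
    using assms(1,2) by (simp add: Suc_le_eq card_gt_0_iff)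
  then have "0 < \<gamma> * (Max (y ` N) - Min (y ` N))"
    using dense by linarith
  then have "0 < \<gamma>"
    using spread by (simp add: zero_less_mult_iff)
  moreover have "2 * (real (card N) - 1) < \<gamma> * (z r - z 0)"
    using dense enumeration by simp
  ultimately obtain i \<theta> where "i < r" "z i < \<theta>" "\<theta> < z (Suc i)"
    and sparse: "sparse_above y N \<gamma> \<theta>" "sparse_below y N \<gamma> \<theta>"
    using exists_sparse_threshold_in_gap[OF assms(1) enum] by blast
  have "\<theta> \<notin> y ` N"
    using enumeration_gap[OF assms(1) enum \<open>i < r\<close>, of \<theta>] \<open>z i < \<theta>\<close> \<open>\<theta> < z (Suc i)\<close> by auto
  moreover have "z 0 \<le> z i" "z (Suc i) \<le> z r"
    using enumeration_le_iff[OF assms(1) enum] \<open>i < r\<close> by simp_all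
  then have "Min (y ` N) < \<theta>" "\<theta> < Max (y ` N)"
    using \<open>z i < \<theta>\<close> \<open>\<theta> < z (Suc i)\<close> enumeration by simp_all
  ultimately show ?thesis
    using sparse by blast
qed

lemma exists_threshold_inverse_square_sum_le:
  fixes y :: "'a \<Rightarrow> real"
  assumes "finite N" "N \<noteq> {}" and spread: "Min (y ` N) < Max (y ` N)"
  shows "\<exists>\<theta>. Min (y ` N) < \<theta> \<and> \<theta> < Max (y ` N) \<and> \<theta> \<notin> y ` N \<and>
    (\<Sum>k\<in>N. 1 / (y k - \<theta>)\<^sup>2)
      \<le> 20 * real (card N) * (real (card N) - 1) / (Max (y ` N) - Min (y ` N))\<^sup>2"
proof -
  define n where "n = real (card N)"
  define D where "D = Max (y ` N) - Min (y ` N)"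
  define \<gamma> where "\<gamma> = (2 * n - 1) / D"
  have "0 < D"
    using spread by (simp add: D_def)
  have "{Min (y ` N), Max (y ` N)} \<subseteq> y ` N"
    using assms by simp
  then have "card {Min (y ` N), Max (y ` N)} \<le> card (y ` N)"
    using \<open>finite N\<close> by (intro card_mono) auto
  then have "2 \<le> n"
    using spread card_image_le[OF \<open>finite N\<close>, of y] by (simp add: n_def)
  have "2 * (n - 1) < \<gamma> * D"
    using \<open>0 < D\<close> by (simp add: \<gamma>_def)
  then obtain \<theta> where \<theta>: "Min (y ` N) < \<theta>" "\<theta> < Max (y ` N)" "\<theta> \<notin> y ` N"
    and sparse: "sparse_above y N \<gamma> \<theta>" "sparse_below y N \<gamma> \<theta>"
    using exists_sparse_threshold[OF assms, of \<gamma>] unfolding n_def D_def by blast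
  have N_split: "{k\<in>N. \<theta> < y k} \<union> {k\<in>N. y k < \<theta>} = N"
    using \<theta>(3) by force
  have "(\<Sum>k\<in>N. 1 / (y k - \<theta>)\<^sup>2)
      = (\<Sum>k\<in>{k\<in>N. \<theta> < y k}. 1 / (y k - \<theta>)\<^sup>2) + (\<Sum>k\<in>{k\<in>N. y k < \<theta>}. 1 / (y k - \<theta>)\<^sup>2)"
    by (rule sum.union_disjoint[where A = "{k\<in>N. \<theta> < y k}" and B = "{k\<in>N. y k < \<theta>}",
          unfolded N_split]) (use \<open>finite N\<close> in auto)
  also have "\<dots> \<le> 4 * \<gamma>\<^sup>2"
    using sum_inverse_square_above_le[OF \<open>finite N\<close> sparse(1)]
      sum_inverse_square_below_le[OF \<open>finite N\<close> sparse(2)] by simp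
  also have "\<dots> = 4 * (2 * n - 1)\<^sup>2 / D\<^sup>2"
    by (simp add: \<gamma>_def power_divide)
  also have "\<dots> \<le> 20 * n * (n - 1) / D\<^sup>2"
  proof (rule divide_right_mono)
    have "0 \<le> 4 * (n - 2) * (n + 1)"
      using \<open>2 \<le> n\<close> by simp
    then show "4 * (2 * n - 1)\<^sup>2 \<le> 20 * n * (n - 1)"
      by (simp add: power2_eq_square algebra_simps)
  qed simp
  finally show ?thesis
    using \<theta> by (auto simp: n_def D_def)
qed

section \<open>Mixture components and axis-aligned cuts\<close>

lemma classify_measurable [measurable]:
  "classify (T :: 'd::finite dtree) \<in> borel \<rightarrow>\<^sub>M count_space UNIV"
proof (induction T)
  case (Leaf k)
  then show ?case by simp
next
  case (Node i \<theta> L R)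
  note [measurable] = Node.IH
  have "classify (Node i \<theta> L R) = (\<lambda>x. if x $ i \<le> \<theta> then classify L x else classify R x)"
    by auto
  then show ?case by simp
qed

lemma measure_wrong_side_le:
  fixes f :: "'a \<Rightarrow> real"
  assumes "finite_measure M" "f \<in> borel_measurable M" "integrable M (\<lambda>x. (f x - m)\<^sup>2)" "m \<noteq> \<theta>"
  shows "measure M {x\<in>space M. (f x \<le> \<theta>) \<noteq> (m \<le> \<theta>)} \<le> (\<integral>x. (f x - m)\<^sup>2 \<partial>M) / (m - \<theta>)\<^sup>2"
proof -
  interpret finite_measure M by fact
  have [measurable]: "f \<in> borel_measurable M" by fact
  have "measure M {x\<in>space M. (f x \<le> \<theta>) \<noteq> (m \<le> \<theta>)} \<le> measure M {x\<in>space M. \<bar>m - \<theta>\<bar> \<le> \<bar>f x - m\<bar>}"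
    by (intro finite_measure_mono) auto
  also have "\<dots> \<le> (\<integral>x. (f x - m)\<^sup>2 \<partial>M) / \<bar>m - \<theta>\<bar>\<^sup>2"
    using assms by (intro second_moment_method) auto
  finally show ?thesis by simp
qed

lemma measure_classify_Node_error_le:
  assumes "finite_measure M" "sets M = sets borel"
  shows "measure M {x. classify (Node i \<theta> L R) x \<noteq> k}
    \<le> measure M {x. (x $ i \<le> \<theta>) \<noteq> (m \<le> \<theta>)} + measure M {x. classify (if m \<le> \<theta> then L else R) x \<noteq> k}"
proof -
  interpret finite_measure M
    by fact
  have "measure M {x. classify (Node i \<theta> L R) x \<noteq> k}
      \<le> measure M ({x. (x $ i \<le> \<theta>) \<noteq> (m \<le> \<theta>)} \<union> {x. classify (if m \<le> \<theta> then L else R) x \<noteq> k})"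
    by (rule finite_measure_mono) (auto simp: assms(2))
  also have "\<dots> \<le> measure M {x. (x $ i \<le> \<theta>) \<noteq> (m \<le> \<theta>)} + measure M {x. classify (if m \<le> \<theta> then L else R) x \<noteq> k}"
    by (rule measure_Un_le) (auto simp: assms(2))
  finally show ?thesis .
qed

lemma mixture_modelD:
  assumes "mixture_model K p M \<mu> \<sigma> \<alpha>"
  shows "1 \<le> \<alpha>" "0 < \<sigma> j" "(\<Sum>k<K. p k) = 1"
    and "k < K \<Longrightarrow> 0 \<le> p k" "k < K \<Longrightarrow> p k \<le> \<alpha> / real K"
    and "k < K \<Longrightarrow> finite_measure (M k)" "k < K \<Longrightarrow> sets (M k) = sets borel"
    and "k < K \<Longrightarrow> integrable (M k) (\<lambda>x. (x $ j - \<mu> k $ j)\<^sup>2)"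
    and "k < K \<Longrightarrow> (\<integral>x. (x $ j - \<mu> k $ j)\<^sup>2 \<partial>M k) = (\<sigma> j)\<^sup>2"
  using assms unfolding mixture_model_def prob_space_def by auto

lemma ENR_le_separation:
  fixes \<mu> :: "nat \<Rightarrow> real^'d"
  assumes "k < K" "l < K" "k \<noteq> l"
  shows "\<exists>j. ENR K \<mu> \<sigma> \<le> \<bar>\<mu> k $ j - \<mu> l $ j\<bar>\<^sup>2 / (\<sigma> j)\<^sup>2"
proof -
  define sep where "sep k l = Max (range (\<lambda>j. \<bar>\<mu> k $ j - \<mu> l $ j\<bar>\<^sup>2 / (\<sigma> j)\<^sup>2))" for k l
  have "{sep k l | k l. k < K \<and> l < K \<and> k \<noteq> l} \<subseteq> (\<lambda>(k, l). sep k l) ` ({..<K} \<times> {..<K})"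
    by auto
  then have "finite {sep k l | k l. k < K \<and> l < K \<and> k \<noteq> l}"
    by (rule finite_subset) simp
  then have "ENR K \<mu> \<sigma> \<le> sep k l"
    unfolding ENR_def sep_def[symmetric] using assms by (intro Min_le) auto
  moreover have "sep k l \<in> range (\<lambda>j. \<bar>\<mu> k $ j - \<mu> l $ j\<bar>\<^sup>2 / (\<sigma> j)\<^sup>2)"
    unfolding sep_def by (rule Max_in) auto
  then obtain j where "sep k l = \<bar>\<mu> k $ j - \<mu> l $ j\<bar>\<^sup>2 / (\<sigma> j)\<^sup>2"
    by blast
  ultimately show ?thesis by auto
qed

lemma spread_eq_range:
  assumes "finite N" "N \<noteq> {}"
  shows "spread \<mu> \<sigma> N i = (Max ((\<lambda>k. \<mu> k $ i) ` N) - Min ((\<lambda>k. \<mu> k $ i) ` N)) / \<sigma> i"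
proof -
  let ?a = "\<lambda>k. \<mu> k $ i"
  let ?S = "{\<bar>?a k - ?a l\<bar> | k l. k \<in> N \<and> l \<in> N}"
  have "?S = (\<lambda>(k, l). \<bar>?a k - ?a l\<bar>) ` (N \<times> N)"
    by auto
  then have "finite ?S"
    using \<open>finite N\<close> by simp
  obtain kmin kmax where "kmin \<in> N" "Min (?a ` N) = ?a kmin" "kmax \<in> N" "Max (?a ` N) = ?a kmax"
  proof -
    have "Min (?a ` N) \<in> ?a ` N" "Max (?a ` N) \<in> ?a ` N"
      using assms by simp_all
    then show thesis
      using that by blast
  qed
  moreover have "Min (?a ` N) \<le> Max (?a ` N)"
    using assms \<open>kmin \<in> N\<close> \<open>Min (?a ` N) = ?a kmin\<close> by (metis Max_ge finite_imageI imageI)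
  ultimately have "Max (?a ` N) - Min (?a ` N) \<in> ?S"
    by force
  moreover have "v \<le> Max (?a ` N) - Min (?a ` N)" if "v \<in> ?S" for v
  proof -
    obtain k l where "k \<in> N" "l \<in> N" "v = \<bar>?a k - ?a l\<bar>"
      using \<open>v \<in> ?S\<close> by blast
    moreover have "Min (?a ` N) \<le> ?a k" "?a k \<le> Max (?a ` N)" "Min (?a ` N) \<le> ?a l" "?a l \<le> Max (?a ` N)"
      using assms calculation by auto
    ultimately show ?thesis
      by (auto simp: abs_le_iff)
  qed
  ultimately have "Max ?S = Max (?a ` N) - Min (?a ` N)"
    using \<open>finite ?S\<close> by (intro Max_eqI) auto
  then show ?thesis
    by (simp add: spread_def)
qed

section \<open>Error of the MMDT tree\<close>

definition cut_error ::
  "(nat \<Rightarrow> real) \<Rightarrow> (nat \<Rightarrow> (real^'d) measure) \<Rightarrow> (nat \<Rightarrow> real^'d) \<Rightarrow> nat set \<Rightarrow> 'd \<Rightarrow> real \<Rightarrow> real" where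
  "cut_error p M \<mu> N i \<theta> = (\<Sum>k\<in>N. p k * measure (M k) {x. (x $ i \<le> \<theta>) \<noteq> (\<mu> k $ i \<le> \<theta>)})"

lemma cut_error_eq_split_error:
  assumes "\<And>k. k \<in> N \<Longrightarrow> 0 \<le> p k"
  shows "cut_error p M \<mu> N i \<theta> = (\<Sum>m\<in>N. p m) * split_error p M \<mu> N i \<theta>"
proof (cases "finite N \<and> (\<Sum>m\<in>N. p m) \<noteq> 0")
  case True
  then show ?thesis
    by (simp add: cut_error_def split_error_def sum_distrib_left)
next
  case False
  then have "infinite N \<or> (\<forall>k\<in>N. p k = 0)"
    using assms sum_nonneg_eq_0_iff by blast
  then show ?thesis
    by (auto simp: cut_error_def split_error_def)
qed

lemma ENR_mult_square_le_range:
  fixes \<mu> :: "nat \<Rightarrow> real^'d"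
  assumes "\<And>j. 0 < \<sigma> j" "finite N" "N \<subseteq> {..<K}" "2 \<le> card N"
    and axis: "\<And>i'. spread \<mu> \<sigma> N i' \<le> spread \<mu> \<sigma> N i"
  shows "ENR K \<mu> \<sigma> * (\<sigma> i)\<^sup>2 \<le> (Max ((\<lambda>k. \<mu> k $ i) ` N) - Min ((\<lambda>k. \<mu> k $ i) ` N))\<^sup>2"
proof -
  have "\<not> card N \<le> Suc 0"
    using \<open>2 \<le> card N\<close> by simp
  then obtain k l where "k \<in> N" "l \<in> N" "k \<noteq> l"
    using card_le_Suc0_iff_eq[OF \<open>finite N\<close>] by blast
  then obtain j where j: "ENR K \<mu> \<sigma> \<le> \<bar>\<mu> k $ j - \<mu> l $ j\<bar>\<^sup>2 / (\<sigma> j)\<^sup>2"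
    using ENR_le_separation \<open>N \<subseteq> {..<K}\<close> by blast
  have "N \<noteq> {}"
    using \<open>k \<in> N\<close> by auto
  have "\<bar>\<mu> k $ j - \<mu> l $ j\<bar> \<le> Max ((\<lambda>k. \<mu> k $ j) ` N) - Min ((\<lambda>k. \<mu> k $ j) ` N)"
    using \<open>k \<in> N\<close> \<open>l \<in> N\<close> \<open>finite N\<close> by (auto simp: abs_le_iff intro!: diff_mono)
  then have "\<bar>\<mu> k $ j - \<mu> l $ j\<bar> / \<sigma> j
      \<le> (Max ((\<lambda>k. \<mu> k $ j) ` N) - Min ((\<lambda>k. \<mu> k $ j) ` N)) / \<sigma> j"
    using assms(1)[of j] by (intro divide_right_mono) auto
  also have "\<dots> \<le> spread \<mu> \<sigma> N i"
    using axis[of j] by (simp only: spread_eq_range[OF \<open>finite N\<close> \<open>N \<noteq> {}\<close>])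
  finally have "\<bar>\<mu> k $ j - \<mu> l $ j\<bar> / \<sigma> j \<le> spread \<mu> \<sigma> N i" .
  then have "(\<bar>\<mu> k $ j - \<mu> l $ j\<bar> / \<sigma> j)\<^sup>2 \<le> (spread \<mu> \<sigma> N i)\<^sup>2"
    using assms(1)[of j] by (intro power_mono) auto
  then have "ENR K \<mu> \<sigma> \<le> (spread \<mu> \<sigma> N i)\<^sup>2"
    using j by (simp add: power_divide)
  then show ?thesis
    using assms(1)[of i]
    by (simp add: spread_eq_range[OF \<open>finite N\<close> \<open>N \<noteq> {}\<close>] power_divide pos_le_divide_eq)
qed

lemma cut_error_le_inverse_square_sum:
  fixes \<mu> :: "nat \<Rightarrow> real^'d"
  assumes model: "mixture_model K p M \<mu> \<sigma> \<alpha>" and "N \<subseteq> {..<K}" and "\<theta> \<notin> (\<lambda>k. \<mu> k $ i) ` N"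
  shows "cut_error p M \<mu> N i \<theta> \<le> \<alpha> / real K * (\<sigma> i)\<^sup>2 * (\<Sum>k\<in>N. 1 / (\<mu> k $ i - \<theta>)\<^sup>2)"
proof -
  have chebyshev: "measure (M k) {x. (x $ i \<le> \<theta>) \<noteq> (\<mu> k $ i \<le> \<theta>)} \<le> (\<sigma> i)\<^sup>2 / (\<mu> k $ i - \<theta>)\<^sup>2"
    if "k \<in> N" for k
  proof -
    have "k < K"
      using that assms(2) by auto
    have sets: "sets (M k) = sets borel"
      using mixture_modelD(7)[OF model \<open>k < K\<close>] .
    then have "space (M k) = UNIV"
      using sets_eq_imp_space_eq by fastforce
    moreover have "(\<lambda>x. x $ i) \<in> borel_measurable (M k)"
      by (simp add: measurable_cong_sets[OF sets refl])
    ultimately show ?thesis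
      using measure_wrong_side_le[of "M k" "\<lambda>x. x $ i" "\<mu> k $ i" \<theta>] assms(3) that
        mixture_modelD(6,8,9)[OF model \<open>k < K\<close>] by force
  qed
  have "cut_error p M \<mu> N i \<theta> \<le> (\<Sum>k\<in>N. \<alpha> / real K * ((\<sigma> i)\<^sup>2 / (\<mu> k $ i - \<theta>)\<^sup>2))"
    unfolding cut_error_def using chebyshev assms(2) mixture_modelD(1,4,5)[OF model]
    by (intro sum_mono mult_mono) auto
  then show ?thesis
    by (simp add: sum_distrib_left)
qed

lemma optimal_cut_error_le:
  fixes \<mu> :: "nat \<Rightarrow> real^'d"
  assumes model: "mixture_model K p M \<mu> \<sigma> \<alpha>" and "0 < ENR K \<mu> \<sigma>"
    and N: "finite N" "N \<subseteq> {..<K}" "2 \<le> card N"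
    and axis: "\<And>i'. spread \<mu> \<sigma> N i' \<le> spread \<mu> \<sigma> N i"
    and spread: "Min ((\<lambda>k. \<mu> k $ i) ` N) < Max ((\<lambda>k. \<mu> k $ i) ` N)"
    and optimal: "\<And>\<theta>'. Min ((\<lambda>k. \<mu> k $ i) ` N) < \<theta>' \<Longrightarrow> \<theta>' < Max ((\<lambda>k. \<mu> k $ i) ` N)
                  \<Longrightarrow> split_error p M \<mu> N i \<theta> \<le> split_error p M \<mu> N i \<theta>'"
  shows "cut_error p M \<mu> N i \<theta> \<le> 20 * \<alpha> / (real K * ENR K \<mu> \<sigma>) * (real (card N) * (real (card N) - 1))"
proof -
  define q where "q = ENR K \<mu> \<sigma>"
  define n where "n = real (card N)"
  define D where "D = Max ((\<lambda>k. \<mu> k $ i) ` N) - Min ((\<lambda>k. \<mu> k $ i) ` N)"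
  have p_nonneg: "0 \<le> p k" if "k \<in> N" for k
    using that N mixture_modelD(4)[OF model] by auto
  have "N \<noteq> {}" "0 < D"
    using N spread by (auto simp: D_def)
  have "q * (\<sigma> i)\<^sup>2 \<le> D\<^sup>2"
    unfolding q_def D_def using ENR_mult_square_le_range mixture_modelD(2)[OF model] N axis by blast
  then have \<sigma>_le: "(\<sigma> i)\<^sup>2 \<le> D\<^sup>2 / q"
    using \<open>0 < ENR K \<mu> \<sigma>\<close> by (simp add: q_def field_simps)
  obtain \<theta>' where \<theta>': "Min ((\<lambda>k. \<mu> k $ i) ` N) < \<theta>'" "\<theta>' < Max ((\<lambda>k. \<mu> k $ i) ` N)"
      "\<theta>' \<notin> (\<lambda>k. \<mu> k $ i) ` N"
    and sum_le: "(\<Sum>k\<in>N. 1 / (\<mu> k $ i - \<theta>')\<^sup>2) \<le> 20 * n * (n - 1) / D\<^sup>2"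
    using exists_threshold_inverse_square_sum_le[OF \<open>finite N\<close> \<open>N \<noteq> {}\<close> spread]
    unfolding n_def D_def by blast
  have "cut_error p M \<mu> N i \<theta> = (\<Sum>m\<in>N. p m) * split_error p M \<mu> N i \<theta>"
    "cut_error p M \<mu> N i \<theta>' = (\<Sum>m\<in>N. p m) * split_error p M \<mu> N i \<theta>'"
    using cut_error_eq_split_error p_nonneg by blast+
  then have "cut_error p M \<mu> N i \<theta> \<le> cut_error p M \<mu> N i \<theta>'"
    using optimal[OF \<theta>'(1,2)] p_nonneg by (simp add: mult_left_mono sum_nonneg)
  also have "\<dots> \<le> \<alpha> / real K * ((\<sigma> i)\<^sup>2 * (\<Sum>k\<in>N. 1 / (\<mu> k $ i - \<theta>')\<^sup>2))"
    using cut_error_le_inverse_square_sum[OF model \<open>N \<subseteq> {..<K}\<close> \<theta>'(3)] by (simp add: mult.assoc)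
  also have "\<dots> \<le> \<alpha> / real K * (D\<^sup>2 / q * (20 * n * (n - 1) / D\<^sup>2))"
  proof (intro mult_left_mono mult_mono \<sigma>_le sum_le)
    show "0 \<le> \<alpha> / real K"
      using mixture_modelD(1)[OF model] by simp
    show "0 \<le> D\<^sup>2 / q"
      using \<open>0 < ENR K \<mu> \<sigma>\<close> by (simp add: q_def)
    show "0 \<le> (\<Sum>k\<in>N. 1 / (\<mu> k $ i - \<theta>')\<^sup>2)"
      by (intro sum_nonneg) simp
  qed
  also have "\<dots> = 20 * \<alpha> / (real K * q) * (n * (n - 1))"
    using \<open>0 < D\<close> by (simp add: power2_eq_square)
  finally show ?thesis
    by (simp add: q_def n_def)
qed

lemma sum_classify_Node_error_le:
  assumes "finite N" "\<And>k. k \<in> N \<Longrightarrow> 0 \<le> p k"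
    and "\<And>k. k \<in> N \<Longrightarrow> finite_measure (M k)" "\<And>k. k \<in> N \<Longrightarrow> sets (M k) = sets borel"
  shows "(\<Sum>k\<in>N. p k * measure (M k) {x. classify (Node i \<theta> L R) x \<noteq> k})
    \<le> cut_error p M \<mu> N i \<theta>
      + (\<Sum>k\<in>{k\<in>N. \<mu> k $ i \<le> \<theta>}. p k * measure (M k) {x. classify L x \<noteq> k})
      + (\<Sum>k\<in>{k\<in>N. \<theta> < \<mu> k $ i}. p k * measure (M k) {x. classify R x \<noteq> k})"
proof -
  define err where "err T k = p k * measure (M k) {x. classify T x \<noteq> k}" for T k
  have "err (Node i \<theta> L R) k
      \<le> p k * measure (M k) {x. (x $ i \<le> \<theta>) \<noteq> (\<mu> k $ i \<le> \<theta>)}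
        + err (if \<mu> k $ i \<le> \<theta> then L else R) k" if "k \<in> N" for k
    using mult_left_mono[OF measure_classify_Node_error_le[OF assms(3,4)[OF that], of i \<theta> L R k "\<mu> k $ i"]
        assms(2)[OF that]]
    unfolding err_def by (simp only: distrib_left)
  moreover have "err (if \<mu> k $ i \<le> \<theta> then L else R) k = (if \<mu> k $ i \<le> \<theta> then err L k else err R k)" for k
    by simp
  ultimately have "(\<Sum>k\<in>N. err (Node i \<theta> L R) k)
      \<le> cut_error p M \<mu> N i \<theta> + (\<Sum>k\<in>N. if \<mu> k $ i \<le> \<theta> then err L k else err R k)"
    unfolding cut_error_def by (simp add: sum.distrib[symmetric] sum_mono)
  also have "(\<Sum>k\<in>N. if \<mu> k $ i \<le> \<theta> then err L k else err R k)
      = (\<Sum>k\<in>{k\<in>N. \<mu> k $ i \<le> \<theta>}. err L k) + (\<Sum>k\<in>{k\<in>N. \<theta> < \<mu> k $ i}. err R k)"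
    using \<open>finite N\<close> by (simp add: sum.If_cases Int_def not_le)
  finally show ?thesis
    by (simp add: err_def add.assoc)
qed

lemma card_split_at_interior_threshold:
  fixes f :: "'a \<Rightarrow> real"
  assumes "finite N" "N \<noteq> {}" "Min (f ` N) < \<theta>" "\<theta> < Max (f ` N)"
  shows "card N = card {k\<in>N. f k \<le> \<theta>} + card {k\<in>N. \<theta> < f k}"
    and "1 \<le> card {k\<in>N. f k \<le> \<theta>}" "1 \<le> card {k\<in>N. \<theta> < f k}"
proof -
  have "N = {k\<in>N. f k \<le> \<theta>} \<union> {k\<in>N. \<theta> < f k}"
    by auto
  moreover have "card ({k\<in>N. f k \<le> \<theta>} \<union> {k\<in>N. \<theta> < f k}) = card {k\<in>N. f k \<le> \<theta>} + card {k\<in>N. \<theta> < f k}"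
    using assms(1) by (intro card_Un_disjoint) auto
  ultimately show "card N = card {k\<in>N. f k \<le> \<theta>} + card {k\<in>N. \<theta> < f k}"
    by simp
  have "\<exists>k\<in>N. f k < \<theta>" "\<exists>k\<in>N. \<theta> < f k"
    using assms by (simp_all add: Min_less_iff Max_gr_iff)
  then show "1 \<le> card {k\<in>N. f k \<le> \<theta>}" "1 \<le> card {k\<in>N. \<theta> < f k}"
    using assms(1) by (auto simp: Suc_le_eq card_gt_0_iff)
qed

lemma cube_split_le:
  fixes a b :: real
  assumes "1 \<le> a" "1 \<le> b"
  shows "(a + b) * (a + b - 1) + (a ^ 3 - a) / 3 + (b ^ 3 - b) / 3 \<le> ((a + b) ^ 3 - (a + b)) / 3"
proof -
  have "0 \<le> (a - 1) * (b - 1)"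
    using assms by simp
  then have "a + b - 1 \<le> a * b"
    by (simp add: algebra_simps)
  then have "(a + b) * (a + b - 1) \<le> (a + b) * (a * b)"
    using assms by (intro mult_left_mono) auto
  moreover have "((a + b) ^ 3 - (a + b)) / 3 - (a ^ 3 - a) / 3 - (b ^ 3 - b) / 3 = (a + b) * (a * b)"
    by (simp add: field_simps power3_eq_cube)
  ultimately show ?thesis
    by linarith
qed

lemma mmdt_error_le:
  fixes \<mu> :: "nat \<Rightarrow> real^'d"
  assumes "mmdt p M \<mu> \<sigma> N T" "mixture_model K p M \<mu> \<sigma> \<alpha>" "0 < ENR K \<mu> \<sigma>" "N \<subseteq> {..<K}"
  shows "(\<Sum>k\<in>N. p k * measure (M k) {x. classify T x \<noteq> k})
    \<le> 20 * \<alpha> / (real K * ENR K \<mu> \<sigma>) * ((real (card N)) ^ 3 - real (card N)) / 3"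
  using assms
proof (induction rule: mmdt.induct)
  case (leaf k)
  then show ?case by simp
next
  case (node N i \<theta> L R)
  define E where "E = 20 * \<alpha> / (real K * ENR K \<mu> \<sigma>)"
  define NL where "NL = {k\<in>N. \<mu> k $ i \<le> \<theta>}"
  define NR where "NR = {k\<in>N. \<theta> < \<mu> k $ i}"
  have model: "mixture_model K p M \<mu> \<sigma> \<alpha>" and "N \<subseteq> {..<K}"
    by fact+
  have "0 \<le> E"
    using mixture_modelD(1)[OF model] \<open>0 < ENR K \<mu> \<sigma>\<close> by (simp add: E_def)
  have "N \<noteq> {}"
    using \<open>2 \<le> card N\<close> by auto
  note card_split = card_split_at_interior_threshold[OF \<open>finite N\<close> this node.hyps(4,5), folded NL_def NR_def]
  have "NL \<subseteq> {..<K}" "NR \<subseteq> {..<K}"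
    using \<open>N \<subseteq> {..<K}\<close> by (auto simp: NL_def NR_def)
  note IH = node.IH[OF model \<open>0 < ENR K \<mu> \<sigma>\<close>, folded NL_def NR_def E_def]
  have cut: "cut_error p M \<mu> N i \<theta> \<le> E * (real (card N) * (real (card N) - 1))"
    unfolding E_def
    by (rule optimal_cut_error_le[OF model \<open>0 < ENR K \<mu> \<sigma>\<close> \<open>finite N\<close> \<open>N \<subseteq> {..<K}\<close> \<open>2 \<le> card N\<close>
          node.hyps(3)[rule_format] order_less_trans[OF node.hyps(4,5)]])
      (use node.hyps(6) in blast)
  have "(\<Sum>k\<in>N. p k * measure (M k) {x. classify (Node i \<theta> L R) x \<noteq> k})
      \<le> cut_error p M \<mu> N i \<theta>
        + (\<Sum>k\<in>NL. p k * measure (M k) {x. classify L x \<noteq> k})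
        + (\<Sum>k\<in>NR. p k * measure (M k) {x. classify R x \<noteq> k})"
    unfolding NL_def NR_def
    using \<open>N \<subseteq> {..<K}\<close> \<open>finite N\<close> mixture_modelD(4,6,7)[OF model]
    by (intro sum_classify_Node_error_le) auto
  also have "\<dots> \<le> E * (real (card N) * (real (card N) - 1))
      + E * ((real (card NL)) ^ 3 - real (card NL)) / 3 + E * ((real (card NR)) ^ 3 - real (card NR)) / 3"
    using cut IH(1)[OF \<open>NL \<subseteq> {..<K}\<close>] IH(2)[OF \<open>NR \<subseteq> {..<K}\<close>] by simp
  also have "\<dots> \<le> E * ((real (card N)) ^ 3 - real (card N)) / 3"
    using mult_left_mono[OF cube_split_le \<open>0 \<le> E\<close>, of "real (card NL)" "real (card NR)"] card_split
    by (simp add: distrib_left)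
  finally show ?case
    by (simp add: E_def)
qed

lemma cube_bound_le_pi_bound:
  fixes K :: nat
  assumes "1 \<le> K" "0 \<le> \<alpha>" "0 < q"
  shows "20 * \<alpha> / (real K * q) * ((real K) ^ 3 - real K) / 3
    \<le> (4 + 2 * pi\<^sup>2 / 3) * \<alpha> * real K * (real K - 1) / q"
proof (cases "K = 1")
  case True
  then show ?thesis by simp
next
  case False
  then have "2 \<le> real K"
    using assms(1) by simp
  have "9 \<le> pi\<^sup>2"
    using power_mono[of 3 pi 2] pi_gt3 by simp
  have "20 * (real K + 1) / 3 \<le> 10 * real K"
    using \<open>2 \<le> real K\<close> by simp
  also have "\<dots> \<le> (4 + 2 * pi\<^sup>2 / 3) * real K"
    using \<open>9 \<le> pi\<^sup>2\<close> by (intro mult_right_mono) auto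
  finally have factor_le: "20 * (real K + 1) / 3 \<le> (4 + 2 * pi\<^sup>2 / 3) * real K" .
  have "20 * \<alpha> / (real K * q) * ((real K) ^ 3 - real K) / 3
      = 20 * (real K + 1) / 3 * (\<alpha> * (real K - 1) / q)"
    using \<open>2 \<le> real K\<close> \<open>0 < q\<close> by (simp add: field_simps power3_eq_cube)
  also have "\<dots> \<le> (4 + 2 * pi\<^sup>2 / 3) * real K * (\<alpha> * (real K - 1) / q)"
    using factor_le \<open>2 \<le> real K\<close> assms by (intro mult_right_mono) auto
  also have "\<dots> = (4 + 2 * pi\<^sup>2 / 3) * \<alpha> * real K * (real K - 1) / q"
    by (simp add: mult_ac)
  finally show ?thesis .
qed

theorem theorem7:
  fixes K :: nat and p :: "nat \<Rightarrow> real" and M :: "nat \<Rightarrow> (real^'d) measure"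
    and \<mu> :: "nat \<Rightarrow> real^'d" and \<sigma> :: "'d \<Rightarrow> real" and \<alpha> q :: real
    and T :: "'d dtree"
  assumes model: "mixture_model K p M \<mu> \<sigma> \<alpha>"
    and beta: "\<exists>\<beta>::real. \<forall>i.
       \<beta> * (\<Sum>k<K. p k * (\<integral>x. \<bar>x $ i - \<mu> k $ i\<bar> \<partial>M k))
         \<ge> sqrt (\<Sum>k<K. p k * (\<integral>x. \<bar>x $ i - \<mu> k $ i\<bar>\<^sup>2 \<partial>M k))"
    and q_def: "q = ENR K \<mu> \<sigma>" and q_pos: "q > 0"
    and tree: "mmdt p M \<mu> \<sigma> {..<K} T"
  shows "(\<Sum>k<K. p k * measure (M k) {x. \<mu> (classify T x) \<noteq> \<mu> k})
           \<le> (4 + 2 * pi\<^sup>2 / 3) * \<alpha> * real K * (real K - 1) / q"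
proof -
  have "1 \<le> K"
    using mixture_modelD(3)[OF model] by (cases K) auto
  have "(\<Sum>k<K. p k * measure (M k) {x. \<mu> (classify T x) \<noteq> \<mu> k})
      \<le> (\<Sum>k<K. p k * measure (M k) {x. classify T x \<noteq> k})"
  proof (intro sum_mono mult_left_mono)
    fix k
    assume "k \<in> {..<K}"
    then interpret finite_measure "M k"
      using mixture_modelD(6)[OF model] by simp
    have "{x. classify T x \<noteq> k} \<in> sets (M k)"
      using mixture_modelD(7)[OF model] \<open>k \<in> {..<K}\<close> by simp measurable
    then show "measure (M k) {x. \<mu> (classify T x) \<noteq> \<mu> k} \<le> measure (M k) {x. classify T x \<noteq> k}"
      by (intro finite_measure_mono) auto
    show "0 \<le> p k"
      using mixture_modelD(4)[OF model] \<open>k \<in> {..<K}\<close> by simp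
  qed
  also have "\<dots> \<le> 20 * \<alpha> / (real K * q) * ((real K) ^ 3 - real K) / 3"
    using mmdt_error_le[OF tree model] q_def q_pos by simp
  also have "\<dots> \<le> (4 + 2 * pi\<^sup>2 / 3) * \<alpha> * real K * (real K - 1) / q"
    using \<open>1 \<le> K\<close> mixture_modelD(1)[OF model] q_pos by (intro cube_bound_le_pi_bound) auto
  finally show ?thesis .
qed

end
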